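(* Let $d\ge 1$, $G\in\mathrm{GL}_{1+d}(\mathbb{R})$, $\gamma\in\mathbb{R}^{1+d}$, $\mathcal{G}(\tilde X)=G\tilde X+\gamma$, and let $(x_A,\xi_A)\in\mathbb{R}^d\times\mathbb{R}^d$ with $\|\xi_A\|<1$ and $\sigma(\xi_A)\notin G\mathcal{P}_0$. Let $(x_B,\xi_B)=\kappa_{U_{\mathcal{G}}}(x_A,\xi_A)$, where $\kappa_{U_{\mathcal{G}}}(x,\xi)=\big(({}^tdg(\xi))^{-1}(x-dS(\xi)),\ g(\xi)\big)$ with $g(\xi)=\boldsymbol{\pi}({}^tG\sigma(\xi))$ and $S(\xi)=\langle\gamma,\sigma(\xi)\rangle$. Let ${}^t\boldsymbol{\pi}:\mathbb{R}^d\to\mathbb{R}^{1+d}$, ${}^t\boldsymbol{\pi}(x)=(0,x)$, and set $A={}^t\boldsymbol{\pi}x_A$ and $B=\mathcal{G}({}^t\boldsymbol{\pi}x_B)$. Then $B-A$ is collinear to $\sigma(\xi_A)$.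
   Context: $\mathbb{R}^{1+d}$ with canonical basis $e_0,\dots,e_d$, Euclidean scalar product $\langle\cdot,\cdot\rangle$; $\boldsymbol{\pi}:\mathbb{R}^{1+d}\to\mathbb{R}^d$ drops the first coordinate; $\sigma(\xi)=(\sqrt{1-\|\xi\|^2},\xi)$ for $\|\xi\|<1$; $\mathcal{P}_0=\{\xi_0=0\}\subset\mathbb{R}^{1+d}$; ${}^t$ denotes transpose. The map $\kappa_{U_{\mathcal{G}}}$ is the (local) canonical transformation associated with the rotated angular spectrum propagator $U_{\mathcal{G}}$; under the assumption $\sigma(\xi_A)\notin G\mathcal{P}_0$, $dg(\xi_A)$ is invertible. *)

theory Defs
  imports "HOL-Analysis.Analysis"
begin

text \<open>R^{1+d} is modelled as real ^ (unit + 'n), where R^d = real ^ 'n;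
  the index Inl () is the coordinate 0 and Inr j are the coordinates 1..d.\<close>

definition pi_proj :: "real ^ (unit + 'n::finite) \<Rightarrow> real ^ 'n" where
  "pi_proj X = (\<chi> j. X $ Inr j)"

definition pi_transp :: "real ^ 'n::finite \<Rightarrow> real ^ (unit + 'n)" where
  "pi_transp x = (\<chi> i. case i of Inl _ \<Rightarrow> 0 | Inr j \<Rightarrow> x $ j)"

definition sigma :: "real ^ 'n::finite \<Rightarrow> real ^ (unit + 'n)" where
  "sigma \<xi> = (\<chi> i. case i of Inl _ \<Rightarrow> sqrt (1 - (norm \<xi>)\<^sup>2) | Inr j \<Rightarrow> \<xi> $ j)"

definition P0 :: "(real ^ (unit + 'n::finite)) set" where
  "P0 = {X. X $ Inl () = 0}"

definition g_map :: "real ^ (unit + 'n) ^ (unit + 'n::finite) \<Rightarrow> real ^ 'n \<Rightarrow> real ^ 'n" where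
  "g_map G \<xi> = pi_proj (transpose G *v sigma \<xi>)"

definition S_map :: "real ^ (unit + 'n::finite) \<Rightarrow> real ^ 'n \<Rightarrow> real" where
  "S_map \<gamma> \<xi> = \<gamma> \<bullet> sigma \<xi>"

definition dg :: "real ^ (unit + 'n) ^ (unit + 'n::finite) \<Rightarrow> real ^ 'n \<Rightarrow> real ^ 'n ^ 'n" where
  "dg G \<xi> = matrix (frechet_derivative (g_map G) (at \<xi>))"

definition dS :: "real ^ (unit + 'n::finite) \<Rightarrow> real ^ 'n \<Rightarrow> real ^ 'n" where
  "dS \<gamma> \<xi> = (\<chi> j. frechet_derivative (S_map \<gamma>) (at \<xi>) (axis j 1))"

definition kappa :: "real ^ (unit + 'n) ^ (unit + 'n::finite) \<Rightarrow> real ^ (unit + 'n)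
    \<Rightarrow> (real ^ 'n) \<times> (real ^ 'n) \<Rightarrow> (real ^ 'n) \<times> (real ^ 'n)" where
  "kappa G \<gamma> p =
     (matrix_inv (transpose (dg G (snd p))) *v (fst p - dS \<gamma> (snd p)), g_map G (snd p))"

definition affG :: "real ^ (unit + 'n) ^ (unit + 'n::finite) \<Rightarrow> real ^ (unit + 'n)
    \<Rightarrow> real ^ (unit + 'n) \<Rightarrow> real ^ (unit + 'n)" where
  "affG G \<gamma> X = G *v X + \<gamma>"

end

theory Submission
  imports Defs
begin

text \<open>The map \<open>\<sigma>\<close> parametrises the upper half of the unit sphere, so the range of its
  differential \<open>d\<sigma>(\<xi>)\<close> is the hyperplane \<open>\<sigma>(\<xi>)\<^sup>\<bottom>\<close>. Since
  \<open>dg(\<xi>) = \<pi> \<circ> \<^sup>tG \<circ> d\<sigma>(\<xi>)\<close> and \<open>dS(\<xi>) = \<^sup>td\<sigma>(\<xi>) \<gamma>\<close>, the defining equation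
  \<open>\<^sup>tdg(\<xi>\<^sub>A) x\<^sub>B = x\<^sub>A - dS(\<xi>\<^sub>A)\<close> of \<open>x\<^sub>B\<close> says precisely that \<open>B - A\<close> is orthogonal
  to \<open>d\<sigma>(\<xi>\<^sub>A) h\<close> for every \<open>h\<close>, i.e. that \<open>B - A\<close> lies on the line spanned by \<open>\<sigma>(\<xi>\<^sub>A)\<close>.
  If \<open>dg(\<xi>\<^sub>A) h = 0\<close>, then \<open>\<^sup>tG d\<sigma>(\<xi>\<^sub>A) h\<close> is a multiple of \<open>e\<^sub>0\<close> orthogonal to
  \<open>G\<^sup>-\<^sup>1\<sigma>(\<xi>\<^sub>A)\<close>, whose head is nonzero because \<open>\<sigma>(\<xi>\<^sub>A) \<notin> G\<P>\<^sub>0\<close>; so it vanishes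
  and \<open>dg(\<xi>\<^sub>A)\<close> is invertible.\<close>

lemma bounded_linear_pi_proj: "bounded_linear (pi_proj :: real ^ (unit + 'n::finite) \<Rightarrow> _)"
  by (rule bounded_linearI') (auto simp: pi_proj_def vec_eq_iff)

lemma bounded_linear_pi_transp: "bounded_linear (pi_transp :: real ^ 'n::finite \<Rightarrow> _)"
  by (rule bounded_linearI') (auto simp: pi_transp_def vec_eq_iff split: sum.splits)

lemma pi_proj_pi_transp [simp]: "pi_proj (pi_transp x) = x"
  by (simp add: pi_proj_def pi_transp_def vec_eq_iff)

lemma pi_proj_zero [simp]: "pi_proj 0 = 0"
  by (simp add: pi_proj_def vec_eq_iff)

lemma pi_transp_Inl [simp]: "pi_transp x $ Inl u = 0"
  by (simp add: pi_transp_def)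

lemma pi_proj_sigma [simp]: "pi_proj (sigma \<xi>) = \<xi>"
  by (simp add: pi_proj_def sigma_def vec_eq_iff)

lemma sigma_Inl [simp]: "sigma \<xi> $ Inl u = sqrt (1 - (norm \<xi>)\<^sup>2)"
  by (simp add: sigma_def)

lemma inner_eq_Inl_plus_pi_proj:
  "(X :: real ^ (unit + 'n::finite)) \<bullet> Y = X $ Inl () * Y $ Inl () + pi_proj X \<bullet> pi_proj Y"
proof -
  have "X \<bullet> Y = (\<Sum>i\<in>Inl ` UNIV \<union> Inr ` UNIV. X $ i * Y $ i)"
    unfolding inner_vec_def UNIV_sum by simp
  also have "\<dots> = (\<Sum>i\<in>Inl ` (UNIV::unit set). X $ i * Y $ i) + (\<Sum>i\<in>Inr ` (UNIV::'n set). X $ i * Y $ i)"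
    by (rule sum.union_disjoint) auto
  also have "\<dots> = X $ Inl () * Y $ Inl () + pi_proj X \<bullet> pi_proj Y"
    by (simp add: sum.reindex inner_vec_def pi_proj_def UNIV_unit)
  finally show ?thesis .
qed

lemma vec_eq_iff_Inl_pi_proj:
  "(X :: real ^ (unit + 'n::finite)) = Y \<longleftrightarrow> X $ Inl () = Y $ Inl () \<and> pi_proj X = pi_proj Y"
  by (auto simp: vec_eq_iff pi_proj_def) (metis (full_types) old.unit.exhaust sumE)

lemma inner_pi_transp: "pi_transp x \<bullet> Y = x \<bullet> pi_proj Y"
  by (simp add: inner_eq_Inl_plus_pi_proj)

lemma sigma_eq: "sigma \<xi> = sqrt (1 - (norm \<xi>)\<^sup>2) *\<^sub>R axis (Inl ()) 1 + pi_transp \<xi>"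
  by (auto simp: sigma_def pi_transp_def axis_def vec_eq_iff split: sum.splits)

lemma one_minus_norm_power2_pos: "norm (\<xi> :: 'a::real_normed_vector) < 1 \<Longrightarrow> 0 < 1 - (norm \<xi>)\<^sup>2"
  by (simp add: abs_square_less_1)

definition sigma_deriv :: "real ^ 'n::finite \<Rightarrow> real ^ 'n \<Rightarrow> real ^ (unit + 'n)" where
  "sigma_deriv \<xi> h = (- (\<xi> \<bullet> h) / sqrt (1 - (norm \<xi>)\<^sup>2)) *\<^sub>R axis (Inl ()) 1 + pi_transp h"

lemma sigma_deriv_Inl [simp]: "sigma_deriv \<xi> h $ Inl u = - (\<xi> \<bullet> h) / sqrt (1 - (norm \<xi>)\<^sup>2)"
  by (simp add: sigma_deriv_def axis_def)

lemma pi_proj_sigma_deriv [simp]: "pi_proj (sigma_deriv \<xi> h) = h"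
  by (simp add: sigma_deriv_def pi_proj_def vec_eq_iff axis_def pi_transp_def)

lemma bounded_linear_sigma_deriv: "bounded_linear (sigma_deriv \<xi>)"
  unfolding linear_conv_bounded_linear[symmetric]
  by (rule linearI)
    (auto simp: sigma_deriv_def vec_eq_iff pi_transp_def axis_def
      add_divide_distrib diff_divide_distrib algebra_simps split: sum.splits)

lemma has_derivative_sqrt_one_minus_norm_power2:
  fixes \<xi> :: "'a::real_inner"
  assumes "norm \<xi> < 1"
  shows "((\<lambda>x. sqrt (1 - (norm x)\<^sup>2)) has_derivative
           (\<lambda>h. - (\<xi> \<bullet> h) / sqrt (1 - (norm \<xi>)\<^sup>2))) (at \<xi>)"
proof -
  have "((\<lambda>x. sqrt (1 - x \<bullet> x)) has_derivative
          (\<lambda>h. inverse (sqrt (1 - \<xi> \<bullet> \<xi>)) / 2 * (- (\<xi> \<bullet> h + h \<bullet> \<xi>)))) (at \<xi>)"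
    using one_minus_norm_power2_pos[OF assms]
    by (auto intro!: derivative_eq_intros simp: power2_norm_eq_inner)
  then show ?thesis
    unfolding power2_norm_eq_inner
    by (rule has_derivative_eq_rhs) (auto simp: inner_commute field_simps)
qed

lemma has_derivative_sigma: "norm \<xi> < 1 \<Longrightarrow> (sigma has_derivative sigma_deriv \<xi>) (at \<xi>)"
  unfolding sigma_eq[abs_def] sigma_deriv_def
  by (intro has_derivative_add has_derivative_scaleR_left has_derivative_sqrt_one_minus_norm_power2
      bounded_linear.has_derivative[OF bounded_linear_pi_transp] has_derivative_ident)

lemma sigma_deriv_orthogonal_sigma: "norm \<xi> < 1 \<Longrightarrow> sigma_deriv \<xi> h \<bullet> sigma \<xi> = 0"
  using one_minus_norm_power2_pos[of \<xi>] by (simp add: inner_eq_Inl_plus_pi_proj inner_commute)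

lemma orthogonal_sigma_deriv_imp_collinear:
  assumes "norm \<xi> < 1" and orth: "\<And>h. W \<bullet> sigma_deriv \<xi> h = 0"
  shows "\<exists>c. W = c *\<^sub>R sigma \<xi>"
proof -
  define s where "s = sqrt (1 - (norm \<xi>)\<^sup>2)"
  have "s > 0"
    using one_minus_norm_power2_pos[OF assms(1)] by (simp add: s_def)
  define w where "w = pi_proj W - (W $ Inl () / s) *\<^sub>R \<xi>"
  have "W \<bullet> sigma_deriv \<xi> w = w \<bullet> w"
    using \<open>s > 0\<close>
    by (simp add: inner_eq_Inl_plus_pi_proj w_def s_def[symmetric] algebra_simps inner_commute)
      (simp add: field_simps)
  with orth have "w = 0"
    by simp
  then have "W = (W $ Inl () / s) *\<^sub>R sigma \<xi>"
    using \<open>s > 0\<close>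
    by (simp add: vec_eq_iff_Inl_pi_proj w_def s_def[symmetric]
        linear_scale[OF bounded_linear.linear[OF bounded_linear_pi_proj]])
  then show ?thesis
    by blast
qed

lemma dg_mult_eq:
  assumes "norm \<xi> < 1"
  shows "dg G \<xi> *v h = pi_proj (transpose G *v sigma_deriv \<xi> h)"
proof -
  let ?L = "\<lambda>h. pi_proj (transpose G *v sigma_deriv \<xi> h)"
  have "bounded_linear ?L"
    by (intro bounded_linear_compose[OF bounded_linear_pi_proj]
        bounded_linear_compose[OF matrix_vector_mul_bounded_linear] bounded_linear_sigma_deriv)
  moreover have "(g_map G has_derivative ?L) (at \<xi>)"
    unfolding g_map_def[abs_def]
    by (intro bounded_linear.has_derivative[OF bounded_linear_pi_proj]
        bounded_linear.has_derivative[OF matrix_vector_mul_bounded_linear] has_derivative_sigma[OF assms])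
  ultimately show ?thesis
    unfolding dg_def frechet_derivative_at[OF \<open>(g_map G has_derivative ?L) (at \<xi>)\<close>, symmetric]
    by (simp add: matrix_works linear_matrix_vector_mul_eq bounded_linear.linear)
qed

lemma dS_inner_eq:
  assumes "norm \<xi> < 1"
  shows "dS \<gamma> \<xi> \<bullet> h = \<gamma> \<bullet> sigma_deriv \<xi> h"
proof -
  let ?L = "\<lambda>h. \<gamma> \<bullet> sigma_deriv \<xi> h"
  have "(S_map \<gamma> has_derivative ?L) (at \<xi>)"
    unfolding S_map_def[abs_def]
    by (intro bounded_linear.has_derivative[OF bounded_linear_inner_right] has_derivative_sigma[OF assms])
  then have dS: "dS \<gamma> \<xi> = (\<chi> j. ?L (axis j 1))"
    unfolding dS_def by (metis frechet_derivative_at)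
  have "linear ?L"
    by (intro bounded_linear.linear bounded_linear_compose[OF bounded_linear_inner_right]
        bounded_linear_sigma_deriv)
  have "?L h = ?L (\<Sum>j\<in>UNIV. h $ j *\<^sub>R axis j 1)"
    using basis_expansion[of h] by (simp add: scalar_mult_eq_scaleR)
  also have "\<dots> = (\<Sum>j\<in>UNIV. h $ j * ?L (axis j 1))"
    by (simp only: linear_sum[OF \<open>linear ?L\<close>] linear_scale[OF \<open>linear ?L\<close>] real_scaleR_def)
  finally show ?thesis
    by (simp add: dS inner_vec_def mult.commute)
qed

lemma matrix_vector_mul_matrix_inv:
  fixes A :: "'a::semiring_1 ^ 'n ^ 'm"
  assumes "invertible A"
  shows "A *v (matrix_inv A *v x) = x"
proof -
  have "A ** matrix_inv A = mat 1"
    using assms unfolding matrix_inv_def invertible_def by (rule someI2_ex) blast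
  then show ?thesis
    by (simp add: matrix_vector_mul_assoc)
qed

lemma inner_matrix_vector_mul: "(A *v x) \<bullet> (y :: real ^ 'm::finite) = x \<bullet> (y v* A)"
  by (metis dot_lmul_matrix inner_commute)

lemma invertible_dg:
  fixes G :: "real ^ (unit + 'n::finite) ^ (unit + 'n)"
  assumes G: "invertible G" and \<xi>: "norm \<xi> < 1" and "sigma \<xi> \<notin> (\<lambda>X. G *v X) ` P0"
  shows "invertible (dg G \<xi>)"
  unfolding invertible_left_inverse matrix_left_invertible_ker
proof (intro allI impI)
  fix h
  assume "dg G \<xi> *v h = 0"
  define Y where "Y = transpose G *v sigma_deriv \<xi> h"
  define X where "X = matrix_inv G *v sigma \<xi>"
  have tail: "pi_proj Y = 0"
    using \<open>dg G \<xi> *v h = 0\<close> by (simp add: dg_mult_eq[OF \<xi>] Y_def)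
  have GX: "G *v X = sigma \<xi>"
    unfolding X_def using G by (rule matrix_vector_mul_matrix_inv)
  have "X \<notin> P0"
    using assms(3) GX by (metis image_eqI)
  then have "X $ Inl () \<noteq> 0"
    by (simp add: P0_def)
  moreover have "Y $ Inl () * X $ Inl () = 0"
  proof -
    have "Y \<bullet> X = sigma_deriv \<xi> h \<bullet> sigma \<xi>"
      by (simp add: Y_def GX[symmetric] dot_lmul_matrix)
    then show ?thesis
      using tail sigma_deriv_orthogonal_sigma[OF \<xi>] by (simp add: inner_eq_Inl_plus_pi_proj)
  qed
  ultimately have "Y = 0"
    using tail by (simp add: vec_eq_iff_Inl_pi_proj)
  then have "sigma_deriv \<xi> h = 0"
    unfolding Y_def using transpose_invertible[OF G]
    by (metis invertible_left_inverse matrix_left_invertible_ker)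
  then show "h = 0"
    by (metis pi_proj_sigma_deriv pi_proj_zero)
qed

lemma inner_sigma_deriv_affG:
  assumes "norm \<xi> < 1"
  shows "(affG G \<gamma> (pi_transp x) - pi_transp y) \<bullet> sigma_deriv \<xi> h
           = (transpose (dg G \<xi>) *v x - (y - dS \<gamma> \<xi>)) \<bullet> h"
proof -
  have "(G *v pi_transp x) \<bullet> sigma_deriv \<xi> h = (transpose (dg G \<xi>) *v x) \<bullet> h"
    by (simp add: inner_matrix_vector_mul dot_lmul_matrix dg_mult_eq[OF assms]
        inner_pi_transp[symmetric])
  moreover have "pi_transp y \<bullet> sigma_deriv \<xi> h = y \<bullet> h"
    by (simp add: inner_pi_transp)
  ultimately show ?thesis
    by (simp add: affG_def inner_diff_left inner_add_left dS_inner_eq[OF assms])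
qed

theorem lemma5p8:
  fixes G :: "real ^ (unit + 'n::finite) ^ (unit + 'n)"
    and \<gamma> :: "real ^ (unit + 'n)"
    and xA \<xi>A xB \<xi>B :: "real ^ 'n"
  assumes "invertible G"
    and "norm \<xi>A < 1"
    and "sigma \<xi>A \<notin> (\<lambda>X. G *v X) ` P0"
    and "(xB, \<xi>B) = kappa G \<gamma> (xA, \<xi>A)"
  shows "\<exists>c::real. affG G \<gamma> (pi_transp xB) - pi_transp xA = c *\<^sub>R sigma \<xi>A"
proof (rule orthogonal_sigma_deriv_imp_collinear[OF assms(2)])
  let ?M = "transpose (dg G \<xi>A)"
  have "xB = matrix_inv ?M *v (xA - dS \<gamma> \<xi>A)"
    using assms(4) by (simp add: kappa_def)
  moreover have "invertible ?M"
    by (intro transpose_invertible invertible_dg assms(1-3))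
  ultimately have "?M *v xB = xA - dS \<gamma> \<xi>A"
    using matrix_vector_mul_matrix_inv by metis
  then show "(affG G \<gamma> (pi_transp xB) - pi_transp xA) \<bullet> sigma_deriv \<xi>A h = 0" for h
    by (simp add: inner_sigma_deriv_affG[OF assms(2)])
qed

end
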